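(* Let $k\in\mathbb{N}$, $n>2k$, $q>k$ and $\lambda_0>0$. Assume there exists a classical solution $w$ of \[ c_{n,k}r^{1-n}\big(r^{n-k}(w')^k\big)'=\lambda_0(1-w)^q\ (0<r<1),\quad w<0\ (0<r<1),\quad w'(0)=0,\ w(1)=0. \] Then for every $\lambda\in(0,\lambda_0)$ problem $(P_\lambda)$ has a maximal bounded solution $u_\lambda$. Moreover, the maximal solutions are decreasing in $\lambda$: if $0<\lambda_1<\lambda_2<\lambda_0$, then $u_{\lambda_2}\le u_{\lambda_1}$.
   Context: $c_{n,k}=\binom{n}{k}/n$. Problem $(P_\lambda)$ ($\lambda>0$) is $c_{n,k}r^{1-n}(r^{n-k}(u')^k)'=\lambda(1-u)^q$ on $(0,1)$, $u<0$ on $(0,1)$, $u'(0)=0$, $u(1)=0$. A classical solution is a function in $\Phi_0^k=\{u\in C^2((0,1))\cap C^1([0,1]): (r^{n-i}(u')^i)'\ge0 \text{ on }(0,1),\ i=1,\dots,k,\ u'(0)=u(1)=0\}$ satisfying the equation. A subsolution is $u\in C^2((0,1))\cap C^1([0,1])$ with $(r^{n-i}(u')^i)'\ge0$ for $i=1,\dots,k$, $c_{n,k}r^{1-n}(r^{n-k}(u')^k)'\ge\lambda(1-u)^q$ and $u(1)\le0$. A maximal solution is a solution $v$ with $u\le v$ for every subsolution $u$. *)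

theory Defs
  imports "HOL-Analysis.Analysis"
begin

definition cnk :: "nat \<Rightarrow> nat \<Rightarrow> real" where
  "cnk n k = real (n choose k) / real n"

text \<open>u in C^2((0,1)) \<inter> C^1([0,1]) with derivative u' (on [0,1], one-sided at the endpoints).\<close>
definition C2C1 :: "(real \<Rightarrow> real) \<Rightarrow> (real \<Rightarrow> real) \<Rightarrow> bool" where
  "C2C1 u u' \<longleftrightarrow>
     (\<forall>x\<in>{0..1}. (u has_real_derivative u' x) (at x within {0..1})) \<and>
     continuous_on {0..1} u' \<and>
     (\<forall>x\<in>{0<..<1}. u' differentiable (at x)) \<and>
     continuous_on {0<..<1} (deriv u')"

definition k_admissible :: "nat \<Rightarrow> nat \<Rightarrow> (real \<Rightarrow> real) \<Rightarrow> (real \<Rightarrow> real) \<Rightarrow> bool" where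
  "k_admissible n k u u' \<longleftrightarrow> C2C1 u u' \<and>
     (\<forall>i\<in>{1..k}. \<forall>r\<in>{0<..<1}. deriv (\<lambda>s. s ^ (n - i) * (u' s) ^ i) r \<ge> 0)"

definition hess_op :: "nat \<Rightarrow> nat \<Rightarrow> (real \<Rightarrow> real) \<Rightarrow> real \<Rightarrow> real" where
  "hess_op n k u' r = cnk n k * r powr (1 - real n) * deriv (\<lambda>s. s ^ (n - k) * (u' s) ^ k) r"

definition classical_solution :: "nat \<Rightarrow> nat \<Rightarrow> real \<Rightarrow> real \<Rightarrow> (real \<Rightarrow> real) \<Rightarrow> bool" where
  "classical_solution n k q lam u \<longleftrightarrow> (\<exists>u'. k_admissible n k u u' \<and> u' 0 = 0 \<and> u 1 = 0 \<and>
     (\<forall>r\<in>{0<..<1}. u r < 0 \<and> hess_op n k u' r = lam * (1 - u r) powr q))"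

definition subsolution :: "nat \<Rightarrow> nat \<Rightarrow> real \<Rightarrow> real \<Rightarrow> (real \<Rightarrow> real) \<Rightarrow> bool" where
  "subsolution n k q lam u \<longleftrightarrow> (\<exists>u'. k_admissible n k u u' \<and> u 1 \<le> 0 \<and>
     (\<forall>r\<in>{0<..<1}. hess_op n k u' r \<ge> lam * (1 - u r) powr q))"

definition maximal_solution :: "nat \<Rightarrow> nat \<Rightarrow> real \<Rightarrow> real \<Rightarrow> (real \<Rightarrow> real) \<Rightarrow> bool" where
  "maximal_solution n k q lam v \<longleftrightarrow> classical_solution n k q lam v \<and>
     (\<forall>u. subsolution n k q lam u \<longrightarrow> (\<forall>r\<in>{0..1}. u r \<le> v r))"

end

theory Submission
  imports Defs
begin

text \<open>
  Freezing the right-hand side at \<lambda> (1 - u)^q for a fixed profile u \<le> 0, the problem is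
  solved by two explicit integrations; call the solution solve u. The map solve is monotone,
  and every subsolution u satisfies u \<le> solve u. Let v be the supremum of all subsolutions
  (there is one: the solution for \<lambda>0 is a subsolution for every \<lambda> < \<lambda>0). Then v is
  monotone and v \<le> solve v = v1 \<le> solve v1. As v1 is continuous, solve v1 is a genuine
  subsolution, so solve v1 \<le> v, which forces v = v1 = solve v1: a solution lying above every
  subsolution. Monotonicity in \<lambda> holds because a solution for \<lambda>2 is a subsolution for
  every \<lambda>1 < \<lambda>2.
\<close>

lemma has_integral_power:
  fixes a b :: real
  assumes "a \<le> b"
  shows "((\<lambda>s. s ^ m) has_integral (b ^ Suc m - a ^ Suc m) / Suc m) {a..b}"
proof -
  have "((\<lambda>s. s ^ m) has_integral (b ^ Suc m / Suc m - a ^ Suc m / Suc m)) {a..b}"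
  proof (rule fundamental_theorem_of_calculus[OF assms])
    fix x assume "x \<in> {a..b}"
    have "((\<lambda>s. s ^ Suc m / Suc m) has_real_derivative x ^ m) (at x within {a..b})"
      using DERIV_cdivide[OF DERIV_pow[of "Suc m" x], of "real (Suc m)"]
      by (simp del: of_nat_Suc)
    then show "((\<lambda>s. s ^ Suc m / Suc m) has_vector_derivative x ^ m) (at x within {a..b})"
      by (simp add: has_real_derivative_iff_has_vector_derivative)
  qed
  then show ?thesis by (simp add: diff_divide_distrib)
qed

lemma powr_diff_mult_power:
  fixes r :: real
  assumes "0 < r" "m \<le> n"
  shows "r powr (real m - real n) * r ^ (n - m) = 1"
proof -
  have "r ^ (n - m) = r powr (real n - real m)"
    using assms by (simp add: powr_realpow[symmetric] of_nat_diff)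
  then show ?thesis using assms by (simp add: powr_add[symmetric])
qed

lemma powr_inverse_power_mult:
  fixes a r :: real
  assumes "0 \<le> a" "0 \<le> r" "1 \<le> k"
  shows "(a * r ^ k) powr (1 / real k) = a powr (1 / real k) * r"
proof -
  have "(r ^ k) powr (1 / real k) = (r powr real k) powr (1 / real k)"
    using assms by (simp add: powr_realpow')
  also have "\<dots> = r" using assms by (simp add: powr_powr)
  finally show ?thesis using assms by (simp add: powr_mult)
qed

lemma k_admissible_continuous:
  assumes "k_admissible n k u u'"
  shows "continuous_on {0..1} u"
  using assms unfolding k_admissible_def C2C1_def
  by (meson DERIV_continuous continuous_on_eq_continuous_within)

lemma k_admissible_deriv_nonneg:
  assumes adm: "k_admissible n k u u'" and "1 \<le> k" "2 \<le> n" and x: "x \<in> {0..1}"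
  shows "0 \<le> u' x"
proof -
  have cont: "continuous_on {0..1} u'"
    and diff: "\<And>y. y \<in> {0<..<1} \<Longrightarrow> u' differentiable (at y)"
    using adm unfolding k_admissible_def C2C1_def by auto
  have deriv1: "0 \<le> deriv (\<lambda>s. s ^ (n - 1) * u' s) y" if "y \<in> {0<..<1}" for y
  proof -
    have "1 \<in> {1..k}" using \<open>1 \<le> k\<close> by simp
    then have "0 \<le> deriv (\<lambda>s. s ^ (n - 1) * u' s ^ 1) y"
      using adm that unfolding k_admissible_def by blast
    then show ?thesis by simp
  qed
  have pos: "0 \<le> u' y" if y: "0 < y" "y \<le> 1" for y
  proof -
    define \<phi> where "\<phi> s = s ^ (n - 1) * u' s" for s
    have "\<phi> 0 \<le> \<phi> y"
    proof (rule DERIV_nonneg_imp_increasing_open[of 0 y \<phi>])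
      fix z assume "0 < z" "z < y"
      then have z: "z \<in> {0<..<1}" using y by auto
      then have "\<phi> differentiable (at z)"
        unfolding \<phi>_def[abs_def] by (intro derivative_intros diff)
      then have "DERIV \<phi> z :> deriv \<phi> z"
        by (simp add: DERIV_deriv_iff_real_differentiable)
      moreover have "0 \<le> deriv \<phi> z"
        using deriv1[OF z] by (simp add: \<phi>_def[abs_def])
      ultimately show "\<exists>D. DERIV \<phi> z :> D \<and> 0 \<le> D" by blast
    qed (use y in \<open>auto simp: \<phi>_def intro!: continuous_intros continuous_on_subset[OF cont]\<close>)
    moreover have "\<phi> 0 = 0" using \<open>2 \<le> n\<close> by (simp add: \<phi>_def)
    ultimately have "0 \<le> \<phi> y" by simp
    moreover have "0 < y ^ (n - 1)" using y by simp
    ultimately show ?thesis by (simp add: \<phi>_def zero_le_mult_iff)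
  qed
  show ?thesis
    using continuous_ge_on_closure[of "{0<..1}" u' x 0] cont x pos by auto
qed

lemma k_admissible_mono:
  assumes adm: "k_admissible n k u u'" and "1 \<le> k" "2 \<le> n" "0 \<le> x" "x \<le> y" "y \<le> 1"
  shows "u x \<le> u y"
proof (rule DERIV_nonneg_imp_increasing_open[OF \<open>x \<le> y\<close>])
  fix z assume "x < z" "z < y"
  then have z: "z \<in> interior {0..1}" using assms by auto
  then have "(u has_real_derivative u' z) (at z within {0..1})"
    using adm interior_subset unfolding k_admissible_def C2C1_def by blast
  then have "DERIV u z :> u' z"
    by (simp add: at_within_interior[OF z])
  then show "\<exists>D. DERIV u z :> D \<and> 0 \<le> D"
    using k_admissible_deriv_nonneg[OF adm \<open>1 \<le> k\<close> \<open>2 \<le> n\<close>, of z] z by auto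
qed (use assms in \<open>auto intro: continuous_on_subset[OF k_admissible_continuous[OF adm]]\<close>)

lemma classical_solution_imp_subsolution:
  assumes "classical_solution n k q lam2 u" "lam1 \<le> lam2"
  shows "subsolution n k q lam1 u"
proof -
  obtain u' where "k_admissible n k u u'" "u 1 = 0"
    and eq: "\<And>r. r \<in> {0<..<1} \<Longrightarrow> hess_op n k u' r = lam2 * (1 - u r) powr q"
    using assms(1) unfolding classical_solution_def by blast
  moreover have "\<forall>r\<in>{0<..<1}. lam1 * (1 - u r) powr q \<le> hess_op n k u' r"
    using eq assms(2) by (auto intro: mult_right_mono)
  ultimately show ?thesis unfolding subsolution_def by auto
qed

locale radial_k_hessian =
  fixes n k :: nat and q lam :: real
  assumes k_pos: "1 \<le> k" and k_less_n: "k < n" and q_pos: "0 < q" and lam_pos: "0 < lam"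
begin

lemma two_le_n: "2 \<le> n"
  using k_pos k_less_n by simp

lemma cnk_pos: "0 < cnk n k"
  using k_less_n by (simp add: cnk_def)

text \<open>
  Integrating the equation twice: r^(n-k) (w')^k = flux u r and w' = slope u.
  At r = 0 the formula gives slope u 0 = 0 because 0 powr a = 0; this is w'(0) = 0.
\<close>

definition source :: "(real \<Rightarrow> real) \<Rightarrow> real \<Rightarrow> real" where
  "source u s = s ^ (n - 1) * lam * (1 - u s) powr q / cnk n k"

definition flux :: "(real \<Rightarrow> real) \<Rightarrow> real \<Rightarrow> real" where
  "flux u r = integral {0..r} (source u)"

definition slope :: "(real \<Rightarrow> real) \<Rightarrow> real \<Rightarrow> real" where
  "slope u r = (r powr (real k - real n) * flux u r) powr (1 / real k)"

definition solve :: "(real \<Rightarrow> real) \<Rightarrow> real \<Rightarrow> real" where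
  "solve u r = - integral {r..1} (slope u)"

definition trial :: "(real \<Rightarrow> real) \<Rightarrow> real \<Rightarrow> bool" where
  "trial u B \<longleftrightarrow> (\<forall>s\<in>{0..1}. - B \<le> u s \<and> u s \<le> 0) \<and> source u integrable_on {0..1}"

lemma source_nonneg: "0 \<le> s \<Longrightarrow> 0 \<le> source u s"
  using lam_pos cnk_pos by (simp add: source_def)

lemma source_antimono:
  assumes "0 \<le> s" "u1 s \<le> u2 s" "u2 s \<le> 0"
  shows "source u2 s \<le> source u1 s"
proof -
  have "(1 - u2 s) powr q \<le> (1 - u1 s) powr q"
    using assms q_pos by (intro powr_mono2) auto
  then show ?thesis
    using assms lam_pos cnk_pos
    by (auto simp: source_def intro!: divide_right_mono mult_left_mono)
qed

lemma continuous_on_source: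
  assumes "continuous_on S u" "\<And>s. s \<in> S \<Longrightarrow> u s \<le> 0"
  shows "continuous_on S (source u)"
proof -
  have "continuous_on S (\<lambda>s. s ^ (n - 1) * lam * (1 - u s) powr q / cnk n k)"
    using assms cnk_pos by (intro continuous_intros) force+
  then show ?thesis by (simp add: source_def[abs_def])
qed

lemma source_integrable_continuous:
  assumes "continuous_on {0..1} u" "\<And>s. s \<in> {0..1} \<Longrightarrow> u s \<le> 0"
  shows "source u integrable_on {0..1}"
  using continuous_on_source[OF assms] by (rule integrable_continuous_interval)

lemma source_integrable_mono:
  assumes "mono_on {0..1} u" "\<And>s. s \<in> {0..1} \<Longrightarrow> u s \<le> 0"
  shows "source u integrable_on {0..1}"
proof -
  define p where "p s = (1 - u s) powr q" for s
  have "mono_on {0..1} (\<lambda>s. - p s)"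
  proof (rule mono_onI)
    fix x y :: real assume "x \<in> {0..1}" "y \<in> {0..1}" "x \<le> y"
    then have "u x \<le> u y" "u y \<le> 0" using assms by (auto simp: mono_on_def)
    then show "- p x \<le> - p y" using q_pos by (simp add: p_def powr_mono2)
  qed
  then have "p integrable_on {0..1}"
    using integrable_neg[OF integrable_on_mono_on] by fastforce
  then have p: "p absolutely_integrable_on {0..1}"
    by (rule nonnegative_absolutely_integrable_1) (simp add: p_def)
  have "(\<lambda>s. s ^ (n - 1) * lam / cnk n k) \<in> borel_measurable (lebesgue_on {0..1})"
    by (intro continuous_imp_measurable_on_sets_lebesgue continuous_intros) (use cnk_pos in auto)
  moreover have "bounded ((\<lambda>s. s ^ (n - 1) * lam / cnk n k) ` {0..1})"
    by (intro compact_imp_bounded compact_continuous_image continuous_intros) (use cnk_pos in auto)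
  ultimately have "(\<lambda>s. s ^ (n - 1) * lam / cnk n k * p s) absolutely_integrable_on {0..1}"
    by (intro absolutely_integrable_bounded_measurable_product_real p) auto
  then show ?thesis
    by (simp add: absolutely_integrable_on_def source_def[abs_def] p_def)
qed

lemma trial_if_continuous:
  assumes "continuous_on {0..1} u" "\<And>s. s \<in> {0..1} \<Longrightarrow> - B \<le> u s \<and> u s \<le> 0"
  shows "trial u B"
  using assms by (auto simp: trial_def intro!: source_integrable_continuous)

lemma trial_const: "a \<le> 0 \<Longrightarrow> trial (\<lambda>_. a) (- a)"
  by (auto intro: trial_if_continuous)

lemma trial_source_integrable: "trial u B \<Longrightarrow> source u integrable_on {0..1}"
  by (simp add: trial_def)

lemma trial_nonpos: "trial u B \<Longrightarrow> s \<in> {0..1} \<Longrightarrow> u s \<le> 0"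
  by (simp add: trial_def)

lemma trial_bound_nonneg: "trial u B \<Longrightarrow> 0 \<le> B"
  unfolding trial_def by force

lemma flux_nonneg:
  assumes "source u integrable_on {0..1}" "0 \<le> r" "r \<le> 1"
  shows "0 \<le> flux u r"
  unfolding flux_def using assms
  by (intro integral_nonneg integrable_subinterval_real[OF assms(1)] source_nonneg) auto

lemma flux_antimono:
  assumes "source u1 integrable_on {0..1}" "source u2 integrable_on {0..1}" "0 \<le> r" "r \<le> 1"
    and "\<And>s. s \<in> {0..r} \<Longrightarrow> u1 s \<le> u2 s \<and> u2 s \<le> 0"
  shows "flux u2 r \<le> flux u1 r"
  unfolding flux_def using assms
  by (intro integral_le integrable_subinterval_real[OF assms(1)]
      integrable_subinterval_real[OF assms(2)] source_antimono) auto

lemma flux_const: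
  assumes "0 \<le> r"
  shows "flux (\<lambda>_. a) r = lam * (1 - a) powr q / cnk n k / n * r ^ n"
proof -
  define C where "C = lam * (1 - a) powr q / cnk n k"
  have "source (\<lambda>_. a) = (\<lambda>s. s ^ (n - 1) * C)"
    by (auto simp: source_def C_def)
  moreover have "((\<lambda>s. s ^ (n - 1) * C) has_integral r ^ n / n * C) {0..r}"
    using has_integral_mult_left[OF has_integral_power[OF assms, of "n - 1"], of C] two_le_n
    by (simp add: power_0_left)
  ultimately have "flux (\<lambda>_. a) r = r ^ n / n * C"
    unfolding flux_def by (metis integral_unique)
  then show ?thesis by (simp add: C_def mult_ac)
qed

lemma slope_nonneg: "0 \<le> slope u r"
  by (simp add: slope_def)

lemma slope_zero: "slope u 0 = 0"
  by (simp add: slope_def)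

lemma slope_antimono:
  assumes "source u1 integrable_on {0..1}" "source u2 integrable_on {0..1}" "0 \<le> r" "r \<le> 1"
    and "\<And>s. s \<in> {0..r} \<Longrightarrow> u1 s \<le> u2 s \<and> u2 s \<le> 0"
  shows "slope u2 r \<le> slope u1 r"
proof -
  have "r powr (real k - real n) * flux u2 r \<le> r powr (real k - real n) * flux u1 r"
    using flux_antimono[OF assms] by (intro mult_left_mono) auto
  moreover have "0 \<le> r powr (real k - real n) * flux u2 r"
    using flux_nonneg[OF assms(2-4)] by simp
  ultimately show ?thesis using k_pos by (simp add: slope_def powr_mono2)
qed

lemma slope_const:
  assumes "0 \<le> r"
  shows "slope (\<lambda>_. a) r = (lam * (1 - a) powr q / cnk n k / n) powr (1 / real k) * r"
proof (cases "r = 0")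
  case True then show ?thesis by (simp add: slope_zero)
next
  case False
  then have r: "0 < r" using assms by simp
  have "r powr (real k - real n) * r ^ n = r ^ k"
  proof -
    have "r ^ n = r ^ (n - k) * r ^ k"
      using k_less_n by (simp add: power_add[symmetric])
    then show ?thesis
      using powr_diff_mult_power[OF r, of k n] k_less_n by simp
  qed
  define C where "C = lam * (1 - a) powr q / cnk n k / n"
  have "0 \<le> C" using lam_pos cnk_pos by (simp add: C_def)
  have "r powr (real k - real n) * flux (\<lambda>_. a) r = C * r ^ k"
    using flux_const[OF assms, of a] \<open>r powr (real k - real n) * r ^ n = r ^ k\<close>
    by (simp add: C_def)
  then show ?thesis
    using powr_inverse_power_mult[OF \<open>0 \<le> C\<close> assms k_pos] by (simp add: slope_def C_def)
qed

lemma continuous_on_flux: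
  assumes "source u integrable_on {0..1}"
  shows "continuous_on {0..1} (flux u)"
  using indefinite_integral_continuous_1[OF assms] by (simp add: flux_def[abs_def])

lemma flux_has_derivative:
  assumes "trial u B" "continuous_on {0..1} u" "x \<in> {0<..<1}"
  shows "(flux u has_real_derivative source u x) (at x)"
proof -
  have "((\<lambda>r. integral {0..r} (source u)) has_real_derivative source u x) (at x within {0..1})"
    using assms by (intro integral_has_real_derivative continuous_on_source) (auto simp: trial_def)
  moreover have "at x within {0..1} = at x"
    using assms(3) by (intro at_within_interior) simp
  ultimately show ?thesis by (simp add: flux_def[abs_def])
qed

lemma trial_flux_pos:
  assumes "trial u B" "0 < r" "r \<le> 1"
  shows "0 < flux u r"
proof -
  have "flux (\<lambda>_. 0) r \<le> flux u r"
    using assms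
    by (intro flux_antimono trial_source_integrable[OF assms(1)]
        trial_source_integrable[OF trial_const[of 0]]) (auto simp: trial_def)
  moreover have "0 < flux (\<lambda>_. 0) r"
    using assms lam_pos cnk_pos k_less_n by (simp add: flux_const)
  ultimately show ?thesis by linarith
qed

lemma trial_slope_ge:
  assumes "trial u B" "0 \<le> r" "r \<le> 1"
  shows "(lam / cnk n k / n) powr (1 / real k) * r \<le> slope u r"
proof -
  have "slope (\<lambda>_. 0) r \<le> slope u r"
    using assms
    by (intro slope_antimono trial_source_integrable[OF assms(1)]
        trial_source_integrable[OF trial_const[of 0]]) (auto simp: trial_def)
  then show ?thesis using slope_const[OF assms(2), of 0] by simp
qed

lemma trial_slope_le:
  assumes "trial u B" "0 \<le> r" "r \<le> 1"
  shows "slope u r \<le> (lam * (1 + B) powr q / cnk n k / n) powr (1 / real k) * r"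
proof -
  have "- B \<le> 0" using trial_bound_nonneg[OF assms(1)] by simp
  then have "slope u r \<le> slope (\<lambda>_. - B) r"
    using assms
    by (intro slope_antimono trial_source_integrable[OF assms(1)]
        trial_source_integrable[OF trial_const]) (auto simp: trial_def)
  then show ?thesis using slope_const[OF assms(2), of "- B"] by simp
qed

lemma continuous_on_slope:
  assumes "trial u B"
  shows "continuous_on {0..1} (slope u)"
  unfolding continuous_on_eq_continuous_within
proof
  fix x :: real assume x: "x \<in> {0..1}"
  show "continuous (at x within {0..1}) (slope u)"
  proof (cases "x = 0")
    case True
    define C where "C = (lam * (1 + B) powr q / cnk n k / n) powr (1 / real k)"
    have ev: "\<forall>\<^sub>F r in at 0 within {0..1}. 0 \<le> slope u r \<and> slope u r \<le> C * r"
      using trial_slope_le[OF assms] by (auto simp: eventually_at_filter slope_nonneg C_def)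
    have lim: "((\<lambda>r. C * r) \<longlongrightarrow> 0) (at 0 within {0..1})"
      by (rule tendsto_mult_right_zero[OF tendsto_ident_at])
    have "(slope u \<longlongrightarrow> 0) (at 0 within {0..1})"
      by (rule tendsto_sandwich[OF _ _ tendsto_const lim]) (use ev in \<open>auto elim: eventually_mono\<close>)
    then show ?thesis using True by (simp add: continuous_within slope_zero)
  next
    case False
    then have x: "x \<in> {0<..1}" using x by auto
    have nonzero: "y powr (real k - real n) * flux u y \<noteq> 0" if "y \<in> {0<..1}" for y
      using trial_flux_pos[OF assms, of y] that by simp
    have "continuous_on {0<..1} (slope u)"
      unfolding slope_def[abs_def]
      by (intro continuous_intros continuous_on_subset[OF continuous_on_flux]
          trial_source_integrable[OF assms]) (use nonzero in auto)
    then have "continuous (at x within {0<..1}) (slope u)"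
      using x by (simp add: continuous_on_eq_continuous_within)
    moreover have "at x within {0..1} = at x within {0<..1}"
      by (rule at_within_nhd[where S="{0<..<2}"]) (use x in auto)
    ultimately show ?thesis by (simp add: continuous_within)
  qed
qed

lemma slope_integrable:
  assumes "trial u B" "0 \<le> a" "b \<le> 1"
  shows "slope u integrable_on {a..b}"
  using assms by (intro integrable_continuous_interval continuous_on_subset[OF continuous_on_slope]) auto

lemma solve_one: "solve u 1 = 0"
  by (simp add: solve_def)

lemma solve_has_derivative:
  assumes "trial u B" "x \<in> {0..1}"
  shows "(solve u has_real_derivative slope u x) (at x within {0..1})"
  using DERIV_minus[OF integral_has_real_derivative'[OF continuous_on_slope[OF assms(1)] assms(2)]]
  by (simp add: solve_def[abs_def])

lemma continuous_on_solve:
  assumes "trial u B"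
  shows "continuous_on {0..1} (solve u)"
  using solve_has_derivative[OF assms]
  by (meson DERIV_continuous continuous_on_eq_continuous_within)

lemma solve_nonpos:
  assumes "trial u B" "0 \<le> r" "r \<le> 1"
  shows "solve u r \<le> 0"
  unfolding solve_def using assms
  by (simp add: integral_nonneg slope_integrable slope_nonneg)

lemma solve_neg:
  assumes "trial u B" "0 \<le> r" "r < 1"
  shows "solve u r < 0"
proof -
  define C where "C = (lam / cnk n k / n) powr (1 / real k)"
  have "0 < C" using lam_pos cnk_pos k_less_n by (simp add: C_def)
  have "((\<lambda>s. C * s) has_integral C * ((1 - r ^ 2) / 2)) {r..1}"
    using has_integral_mult_right[OF has_integral_power[of r 1 1], of C] assms
    by (simp add: numeral_2_eq_2)
  then have "C * ((1 - r ^ 2) / 2) \<le> integral {r..1} (slope u)"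
    by (rule has_integral_le[OF _ integrable_integral[OF slope_integrable[OF assms(1)]]])
      (use assms trial_slope_ge[OF assms(1)] in \<open>auto simp: C_def\<close>)
  moreover have "0 < C * ((1 - r ^ 2) / 2)"
    using \<open>0 < C\<close> assms by (simp add: power_less_one_iff)
  ultimately show ?thesis by (simp add: solve_def)
qed

lemma solve_mono:
  assumes "trial u1 B1" "trial u2 B2" "\<And>s. s \<in> {0..1} \<Longrightarrow> u1 s \<le> u2 s" "0 \<le> r" "r \<le> 1"
  shows "solve u1 r \<le> solve u2 r"
proof -
  have "slope u2 s \<le> slope u1 s" if "s \<in> {r..1}" for s
    using that assms
    by (intro slope_antimono trial_source_integrable[OF assms(1)] trial_source_integrable[OF assms(2)])
      (auto simp: trial_def)
  then have "integral {r..1} (slope u2) \<le> integral {r..1} (slope u1)"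
    using assms by (intro integral_le slope_integrable[OF assms(1)] slope_integrable[OF assms(2)]) auto
  then show ?thesis by (simp add: solve_def)
qed

lemma trial_solve:
  assumes "trial u B" "\<And>r. r \<in> {0..1} \<Longrightarrow> u r \<le> solve u r"
  shows "trial (solve u) B"
proof (rule trial_if_continuous[OF continuous_on_solve[OF assms(1)]])
  fix s :: real assume s: "s \<in> {0..1}"
  have "- B \<le> u s" using assms(1) s by (simp add: trial_def)
  then show "- B \<le> solve u s \<and> solve u s \<le> 0"
    using assms(2)[OF s] solve_nonpos[OF assms(1)] s by auto
qed

lemma slope_continuously_differentiable:
  assumes "trial u B" "continuous_on {0..1} u"
  shows "\<And>x. x \<in> {0<..<1} \<Longrightarrow> slope u differentiable (at x)"
    and "continuous_on {0<..<1} (deriv (slope u))"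
proof -
  define e where "e = real k - real n"
  define A where "A x = x powr e * flux u x" for x
  define D where "D x = 1 / real k * A x powr (1 / real k - 1) *
    (e * x powr (e - 1) * flux u x + x powr e * source u x)" for x
  have A_pos: "0 < A x" if "x \<in> {0<..<1}" for x
    using trial_flux_pos[OF assms(1), of x] that by (simp add: A_def)
  have deriv: "(slope u has_real_derivative D x) (at x)" if x: "x \<in> {0<..<1}" for x
  proof -
    have "(A has_real_derivative e * x powr (e - 1) * flux u x + x powr e * source u x) (at x)"
      using DERIV_mult[OF has_real_derivative_powr[of x e] flux_has_derivative[OF assms x]] x
      by (simp add: A_def[abs_def] mult.commute)
    from DERIV_fun_powr[OF this A_pos[OF x], of "1 / real k"] show ?thesis
      by (simp add: D_def A_def e_def slope_def[abs_def])
  qed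
  show "slope u differentiable (at x)" if "x \<in> {0<..<1}" for x
    using deriv[OF that] real_differentiable_def by blast
  have "continuous_on {0<..<1} (flux u)"
    by (rule continuous_on_subset[OF continuous_on_flux[OF trial_source_integrable[OF assms(1)]]]) auto
  moreover have "continuous_on {0<..<1} (source u)"
    using assms by (intro continuous_on_source) (auto simp: trial_def elim: continuous_on_subset)
  moreover have nonzero: "x powr e * flux u x \<noteq> 0" if "x \<in> {0<..<1}" for x
    using A_pos[OF that] by (metis A_def less_irrefl)
  ultimately have "continuous_on {0<..<1} D"
    unfolding D_def A_def by (intro continuous_intros) (use nonzero in auto)
  then show "continuous_on {0<..<1} (deriv (slope u))"
    by (rule continuous_on_eq) (simp add: DERIV_imp_deriv[OF deriv])
qed

lemma slope_power_eq:
  assumes "trial u B" "0 < s" "s \<le> 1" "i \<le> k"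
  shows "s ^ (n - i) * slope u s ^ i =
    s powr (real n - real n * real i / real k) * flux u s powr (real i / real k)"
proof -
  have flux_pos: "0 < flux u s" using trial_flux_pos[OF assms(1-3)] .
  have "slope u s ^ i = (s powr (real k - real n) * flux u s) powr (real i / real k)"
    using flux_pos assms(2) by (simp add: slope_def powr_power)
  also have "\<dots> = s powr ((real k - real n) * (real i / real k)) * flux u s powr (real i / real k)"
    using flux_pos assms(2) by (simp add: powr_mult powr_powr)
  finally have slope_pow: "slope u s ^ i = \<dots>" .
  have "s ^ (n - i) = s powr (real n - real i)"
    using assms k_less_n by (simp add: powr_realpow[symmetric] of_nat_diff)
  then have "s ^ (n - i) * slope u s ^ i = s powr ((real n - real i) +
      (real k - real n) * (real i / real k)) * flux u s powr (real i / real k)"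
    unfolding slope_pow by (simp add: powr_add)
  also have "(real n - real i) + (real k - real n) * (real i / real k) =
      real n - real n * real i / real k"
    using k_pos by (simp add: field_simps)
  finally show ?thesis .
qed

lemma deriv_slope_power_nonneg:
  assumes "trial u B" "continuous_on {0..1} u" "x \<in> {0<..<1}" "i \<le> k"
  shows "0 \<le> deriv (\<lambda>s. s ^ (n - i) * slope u s ^ i) x"
proof -
  define e where "e = real n - real n * real i / real k"
  define D where "D = e * x powr (e - 1) * flux u x powr (real i / real k) +
    (real i / real k * flux u x powr (real i / real k - 1) * source u x) * x powr e"
  have x: "0 < x" "x < 1" using assms(3) by auto
  have "real i / real k \<le> 1" using assms(4) k_pos by simp
  from mult_left_le[OF this, of "real n"] have "real n * (real i / real k) \<le> real n" by simp
  then have "0 \<le> e" by (simp add: e_def)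
  then have "0 \<le> D"
    using x source_nonneg[of x u] by (simp add: D_def)
  have "((\<lambda>s. s powr e * flux u s powr (real i / real k)) has_real_derivative D) (at x)"
    using DERIV_mult[OF has_real_derivative_powr[OF x(1), of e]
        DERIV_fun_powr[OF flux_has_derivative[OF assms(1-3)] trial_flux_pos[OF assms(1)],
          of "real i / real k"]] x
    by (simp add: D_def mult.commute)
  then have "((\<lambda>s. s ^ (n - i) * slope u s ^ i) has_real_derivative D) (at x)"
    by (rule has_field_derivative_transform_within_open[where S="{0<..<1}"])
      (use x slope_power_eq[OF assms(1) _ _ assms(4)] in \<open>auto simp: e_def\<close>)
  then show ?thesis using \<open>0 \<le> D\<close> by (simp add: DERIV_imp_deriv)
qed

lemma hess_op_eq_deriv:
  assumes "0 < r"
  shows "hess_op n k u' r = cnk n k / r ^ (n - 1) * deriv (\<lambda>s. s ^ (n - k) * u' s ^ k) r"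
proof -
  have "r powr (1 - real n) = 1 / r ^ (n - 1)"
    using powr_diff_mult_power[OF assms, of 1 n] two_le_n by (simp add: eq_divide_eq)
  then show ?thesis by (simp add: hess_op_def)
qed

lemma hess_op_slope:
  assumes "trial u B" "continuous_on {0..1} u" "r \<in> {0<..<1}"
  shows "hess_op n k (slope u) r = lam * (1 - u r) powr q"
proof -
  have "((\<lambda>s. s ^ (n - k) * slope u s ^ k) has_real_derivative source u r) (at r)"
  proof (rule has_field_derivative_transform_within_open[OF flux_has_derivative[OF assms]])
    fix s :: real assume "s \<in> {0<..<1}"
    then show "flux u s = s ^ (n - k) * slope u s ^ k"
      using slope_power_eq[OF assms(1), of s k] trial_flux_pos[OF assms(1), of s] k_pos by simp
  qed (use assms in auto)
  then show ?thesis
    using assms(3) cnk_pos by (simp add: hess_op_eq_deriv DERIV_imp_deriv source_def)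
qed

lemma solve_k_admissible:
  assumes "trial u B" "continuous_on {0..1} u"
  shows "k_admissible n k (solve u) (slope u)"
  unfolding k_admissible_def C2C1_def
proof (intro conjI ballI)
  show "(solve u has_real_derivative slope u x) (at x within {0..1})" if "x \<in> {0..1}" for x
    using solve_has_derivative[OF assms(1) that] .
  show "0 \<le> deriv (\<lambda>s. s ^ (n - i) * slope u s ^ i) r" if "i \<in> {1..k}" "r \<in> {0<..<1}" for i r
    using deriv_slope_power_nonneg[OF assms that(2)] that(1) by simp
qed (use continuous_on_slope[OF assms(1)] slope_continuously_differentiable[OF assms] in auto)

lemma subsolution_solve:
  assumes "trial u B" "continuous_on {0..1} u" "\<And>r. r \<in> {0..1} \<Longrightarrow> u r \<le> solve u r"
  shows "subsolution n k q lam (solve u)"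
  unfolding subsolution_def
proof (intro exI[of _ "slope u"] conjI ballI solve_k_admissible[OF assms(1,2)])
  show "solve u 1 \<le> 0" by (simp add: solve_one)
  fix r :: real assume r: "r \<in> {0<..<1}"
  have "(1 - solve u r) powr q \<le> (1 - u r) powr q"
    using assms(3)[of r] solve_nonpos[OF assms(1), of r] r q_pos by (intro powr_mono2) auto
  then show "lam * (1 - solve u r) powr q \<le> hess_op n k (slope u) r"
    using hess_op_slope[OF assms(1,2) r] lam_pos by simp
qed

lemma classical_solution_solve:
  assumes "trial u B" "continuous_on {0..1} u" "\<And>r. r \<in> {0..1} \<Longrightarrow> solve u r = u r"
  shows "classical_solution n k q lam (solve u)"
  unfolding classical_solution_def
proof (intro exI[of _ "slope u"] conjI ballI solve_k_admissible[OF assms(1,2)])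
  show "slope u 0 = 0" by (rule slope_zero)
  show "solve u 1 = 0" by (rule solve_one)
  fix r :: real assume r: "r \<in> {0<..<1}"
  then show "solve u r < 0" using solve_neg[OF assms(1)] by simp
  show "hess_op n k (slope u) r = lam * (1 - solve u r) powr q"
    using hess_op_slope[OF assms(1,2) r] assms(3)[of r] r by simp
qed

lemma k_admissible_trial:
  assumes "k_admissible n k u u'" "u 1 \<le> 0"
  shows "trial u (- u 0)"
proof (rule trial_if_continuous[OF k_admissible_continuous[OF assms(1)]])
  fix s :: real assume "s \<in> {0..1}"
  then have "u 0 \<le> u s" "u s \<le> u 1"
    using k_admissible_mono[OF assms(1) k_pos two_le_n] by auto
  then show "- (- u 0) \<le> u s \<and> u s \<le> 0" using assms(2) by simp
qed

lemma flux_le_of_hess_op_ge: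
  assumes adm: "k_admissible n k u u'" and "u 1 \<le> 0"
    and super: "\<And>r. r \<in> {0<..<1} \<Longrightarrow> lam * (1 - u r) powr q \<le> hess_op n k u' r"
    and r: "0 \<le> r" "r \<le> 1"
  shows "flux u r \<le> r ^ (n - k) * u' r ^ k"
proof -
  note trial = k_admissible_trial[OF adm \<open>u 1 \<le> 0\<close>]
  have cont: "continuous_on {0..1} u'" and diff: "\<And>y. y \<in> {0<..<1} \<Longrightarrow> u' differentiable (at y)"
    using adm unfolding k_admissible_def C2C1_def by auto
  define P where "P s = s ^ (n - k) * u' s ^ k" for s
  have "P 0 - flux u 0 \<le> P r - flux u r"
  proof (rule DERIV_nonneg_imp_increasing_open[of 0 r "\<lambda>s. P s - flux u s"])
    fix y assume "0 < y" "y < r"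
    then have y: "y \<in> {0<..<1}" using r by auto
    have "P differentiable (at y)"
      unfolding P_def[abs_def] using diff[OF y] by (intro derivative_intros) auto
    then have "DERIV (\<lambda>s. P s - flux u s) y :> deriv P y - source u y"
      by (intro derivative_intros flux_has_derivative[OF trial k_admissible_continuous[OF adm] y])
        (simp add: DERIV_deriv_iff_real_differentiable)
    moreover have "source u y \<le> deriv P y"
    proof -
      have "source u y = y ^ (n - 1) / cnk n k * (lam * (1 - u y) powr q)"
        by (simp add: source_def)
      also have "\<dots> \<le> y ^ (n - 1) / cnk n k * hess_op n k u' y"
        using super[OF y] y cnk_pos by (intro mult_left_mono) auto
      also have "\<dots> = deriv P y"
        using y cnk_pos by (simp add: hess_op_eq_deriv P_def[abs_def])
      finally show ?thesis .
    qed
    ultimately show "\<exists>D. DERIV (\<lambda>s. P s - flux u s) y :> D \<and> 0 \<le> D" by auto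
  next
    have "continuous_on {0..r} u'" "continuous_on {0..r} (flux u)"
      using r by (auto intro: continuous_on_subset[OF cont]
          continuous_on_subset[OF continuous_on_flux[OF trial_source_integrable[OF trial]]])
    then show "continuous_on {0..r} (\<lambda>s. P s - flux u s)"
      unfolding P_def by (intro continuous_intros)
  qed (use r in simp)
  moreover have "P 0 - flux u 0 = 0" using k_less_n by (simp add: P_def flux_def)
  ultimately show ?thesis by (simp add: P_def)
qed

lemma slope_le_of_hess_op_ge:
  assumes adm: "k_admissible n k u u'" and "u 1 \<le> 0"
    and super: "\<And>r. r \<in> {0<..<1} \<Longrightarrow> lam * (1 - u r) powr q \<le> hess_op n k u' r"
    and r: "0 \<le> r" "r \<le> 1"
  shows "slope u r \<le> u' r"
proof (cases "r = 0")
  case True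
  then show ?thesis
    using k_admissible_deriv_nonneg[OF adm k_pos two_le_n] by (simp add: slope_zero)
next
  case False
  then have "0 < r" using r by simp
  have u'_nonneg: "0 \<le> u' r"
    using k_admissible_deriv_nonneg[OF adm k_pos two_le_n] r by simp
  have "r powr (real k - real n) * flux u r \<le> r powr (real k - real n) * (r ^ (n - k) * u' r ^ k)"
    using flux_le_of_hess_op_ge[OF assms] by (intro mult_left_mono) auto
  also have "\<dots> = 1 * u' r ^ k"
    using powr_diff_mult_power[OF \<open>0 < r\<close>, of k n] k_less_n by simp
  finally have "slope u r \<le> (1 * u' r ^ k) powr (1 / real k)"
    unfolding slope_def using flux_nonneg[OF k_admissible_trial[OF adm \<open>u 1 \<le> 0\<close>,
          THEN trial_source_integrable] r] k_pos by (intro powr_mono2) auto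
  then show ?thesis
    using powr_inverse_power_mult[of 1 "u' r" k] u'_nonneg k_pos by simp
qed

lemma subsolution_trial: "subsolution n k q lam u \<Longrightarrow> trial u (- u 0)"
  unfolding subsolution_def using k_admissible_trial by blast

lemma subsolution_nonpos: "subsolution n k q lam u \<Longrightarrow> s \<in> {0..1} \<Longrightarrow> u s \<le> 0"
  using trial_nonpos[OF subsolution_trial] .

lemma subsolution_le_solve:
  assumes "subsolution n k q lam u" "r \<in> {0..1}"
  shows "u r \<le> solve u r"
proof -
  obtain u' where adm: "k_admissible n k u u'" and "u 1 \<le> 0"
    and super: "\<And>r. r \<in> {0<..<1} \<Longrightarrow> lam * (1 - u r) powr q \<le> hess_op n k u' r"
    using assms(1) unfolding subsolution_def by blast
  have "(u' has_integral (u 1 - u r)) {r..1}"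
  proof (rule fundamental_theorem_of_calculus)
    fix x assume "x \<in> {r..1}"
    then have "(u has_real_derivative u' x) (at x within {0..1})"
      using adm assms(2) unfolding k_admissible_def C2C1_def by auto
    then have "(u has_real_derivative u' x) (at x within {r..1})"
      by (rule DERIV_subset) (use assms(2) in auto)
    then show "(u has_vector_derivative u' x) (at x within {r..1})"
      by (simp add: has_real_derivative_iff_has_vector_derivative)
  qed (use assms(2) in simp)
  moreover have "slope u x \<le> u' x" if "x \<in> {r..1}" for x
    using slope_le_of_hess_op_ge[OF adm \<open>u 1 \<le> 0\<close> super] that assms(2) by simp
  ultimately have "integral {r..1} (slope u) \<le> u 1 - u r"
    using assms(2) subsolution_trial[OF assms(1)]
    by (intro has_integral_le[OF integrable_integral[OF slope_integrable]]) auto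
  then show ?thesis using \<open>u 1 \<le> 0\<close> by (simp add: solve_def)
qed

definition sup_subsolutions :: "real \<Rightarrow> real" where
  "sup_subsolutions r = (SUP u\<in>{u. subsolution n k q lam u}. u r)"

lemma subsolution_le_sup_subsolutions:
  assumes "subsolution n k q lam u" "r \<in> {0..1}"
  shows "u r \<le> sup_subsolutions r"
  unfolding sup_subsolutions_def
proof (rule cSUP_upper)
  show "bdd_above ((\<lambda>u. u r) ` {u. subsolution n k q lam u})"
    using assms(2) by (auto intro!: bdd_aboveI[of _ 0] simp: subsolution_nonpos)
qed (use assms in simp)

lemma sup_subsolutions_least:
  assumes "subsolution n k q lam w" "\<And>u. subsolution n k q lam u \<Longrightarrow> u r \<le> b"
  shows "sup_subsolutions r \<le> b"
  unfolding sup_subsolutions_def using assms by (intro cSUP_least) auto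

lemma trial_sup_subsolutions:
  assumes w: "subsolution n k q lam w"
  shows "trial sup_subsolutions (- w 0)"
proof -
  have nonpos: "sup_subsolutions s \<le> 0" if "s \<in> {0..1}" for s
    using that by (intro sup_subsolutions_least[OF w]) (simp add: subsolution_nonpos)
  have "mono_on {0..1} sup_subsolutions"
  proof (rule mono_onI)
    fix x y :: real assume "x \<in> {0..1}" "y \<in> {0..1}" "x \<le> y"
    then show "sup_subsolutions x \<le> sup_subsolutions y"
      using k_admissible_mono[OF _ k_pos two_le_n]
      by (intro sup_subsolutions_least[OF w] order.trans[OF _ subsolution_le_sup_subsolutions])
        (auto simp: subsolution_def)
  qed
  moreover have "w 0 \<le> sup_subsolutions s" if "s \<in> {0..1}" for s
    using that w k_admissible_mono[OF _ k_pos two_le_n] subsolution_le_sup_subsolutions[OF w]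
    by (force simp: subsolution_def)
  ultimately show ?thesis
    unfolding trial_def using nonpos source_integrable_mono by auto
qed

lemma sup_subsolutions_le_solve:
  assumes w: "subsolution n k q lam w" and r: "r \<in> {0..1}"
  shows "sup_subsolutions r \<le> solve sup_subsolutions r"
proof (rule sup_subsolutions_least[OF w])
  fix u assume u: "subsolution n k q lam u"
  have "u r \<le> solve u r" by (rule subsolution_le_solve[OF u r])
  also have "\<dots> \<le> solve sup_subsolutions r"
    using r by (intro solve_mono[OF subsolution_trial[OF u] trial_sup_subsolutions[OF w]]
        subsolution_le_sup_subsolutions[OF u]) auto
  finally show "u r \<le> solve sup_subsolutions r" .
qed

lemma exists_maximal_solution:
  assumes w: "subsolution n k q lam w"
  shows "\<exists>v. maximal_solution n k q lam v \<and> bounded (v ` {0..1})"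
proof -
  let ?v = sup_subsolutions
  define v1 where "v1 = solve ?v"
  have trial_v: "trial ?v (- w 0)" by (rule trial_sup_subsolutions[OF w])
  have v_le_v1: "?v r \<le> v1 r" if "r \<in> {0..1}" for r
    unfolding v1_def by (rule sup_subsolutions_le_solve[OF w that])
  have trial_v1: "trial v1 (- w 0)"
    unfolding v1_def by (rule trial_solve[OF trial_v sup_subsolutions_le_solve[OF w]])
  have cont_v1: "continuous_on {0..1} v1"
    unfolding v1_def by (rule continuous_on_solve[OF trial_v])
  have v1_le_v2: "v1 r \<le> solve v1 r" if "r \<in> {0..1}" for r
    unfolding v1_def using that
    by (intro solve_mono[OF trial_v trial_v1[unfolded v1_def]] v_le_v1[unfolded v1_def]) auto
  have "subsolution n k q lam (solve v1)"
    by (rule subsolution_solve[OF trial_v1 cont_v1 v1_le_v2])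
  then have fixed: "solve v1 r = v1 r" if "r \<in> {0..1}" for r
    using subsolution_le_sup_subsolutions v_le_v1 v1_le_v2 that by (meson order_antisym order_trans)
  have "maximal_solution n k q lam (solve v1)"
    unfolding maximal_solution_def
  proof (intro conjI allI impI ballI classical_solution_solve[OF trial_v1 cont_v1 fixed])
    fix u and r :: real assume "subsolution n k q lam u" "r \<in> {0..1}"
    then show "u r \<le> solve v1 r"
      using subsolution_le_sup_subsolutions v_le_v1 fixed by fastforce
  qed
  moreover have "bounded (solve v1 ` {0..1})"
    by (intro compact_imp_bounded compact_continuous_image continuous_on_solve[OF trial_v1]) simp
  ultimately show ?thesis by blast
qed

end

theorem lemma2:
  fixes n k :: nat and q lam0 :: real
  assumes "k \<ge> 1" and "n > 2 * k" and "q > real k" and "lam0 > 0"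
    and "\<exists>w. classical_solution n k q lam0 w"
  shows "\<exists>U :: real \<Rightarrow> real \<Rightarrow> real.
           (\<forall>lam\<in>{0<..<lam0}. maximal_solution n k q lam (U lam) \<and> bounded (U lam ` {0..1})) \<and>
           (\<forall>lam1 lam2. 0 < lam1 \<and> lam1 < lam2 \<and> lam2 < lam0 \<longrightarrow>
              (\<forall>r\<in>{0..1}. U lam2 r \<le> U lam1 r))"
proof -
  obtain w where w: "classical_solution n k q lam0 w" using assms(5) by blast
  have "\<exists>v. maximal_solution n k q lam v \<and> bounded (v ` {0..1})" if "lam \<in> {0<..<lam0}" for lam
  proof -
    interpret radial_k_hessian n k q lam
      using assms that by unfold_locales auto
    show ?thesis
      using that by (intro exists_maximal_solution[OF classical_solution_imp_subsolution[OF w]]) simp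
  qed
  then obtain U where U: "\<And>lam. lam \<in> {0<..<lam0} \<Longrightarrow>
      maximal_solution n k q lam (U lam) \<and> bounded (U lam ` {0..1})"
    by metis
  have "U lam2 r \<le> U lam1 r"
    if "0 < lam1" "lam1 < lam2" "lam2 < lam0" "r \<in> {0..1}" for lam1 lam2 r
  proof -
    have "subsolution n k q lam1 (U lam2)"
      using U[of lam2] that
      by (intro classical_solution_imp_subsolution[of _ _ _ lam2]) (auto simp: maximal_solution_def)
    then show ?thesis using U[of lam1] that by (auto simp: maximal_solution_def)
  qed
  with U show ?thesis by blast
qed

end
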